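(* Let $T$ be a tree rooted at a vertex $v$, let $S$ be a dominating set of $T$, let $A\subseteq a_1(S)$, let $N=N(A)\cap N_1(S)$, and set $S'=(S\setminus A)\cup N$. Suppose every vertex of $A$ has the same depth in $T$. Then (i) $|S'|\ge |S|$; (ii) every vertex of $A$, and every descendant of a vertex of $A$, is dominated by $S'$ (i.e. lies in $S'$ or is adjacent to a vertex of $S'$). If in addition $S'$ is a dominating set and every vertex of $N$ is a child of some vertex of $A$, then (iii) no vertex of $N$ is adjacent to any other vertex of $S'$, and hence $N\subseteq a(S')$; (iv) every vertex $x\in a(S)$ which lies in $S'\setminus a(S')$ is a grandchild of some vertex of $N$, and the parent of $x$ is not in $S'$.
   Context: A dominating set of a graph $G=(V,E)$ is a set $S\subseteq V$ such that every vertex is in $S$ or adjacent to a vertex of $S$. $N(v)$, $N[v]=N(v)\cup\{v\}$ are open/closed neighbourhoods, and for a set $A$, $N(A)=\bigcup_{a\in A}N(a)$. For a dominating set $S$: $a(S)=\{u\in S: S\setminus\{u\}\text{ is not dominating}\}$ (critical vertices; vertices of $S\setminus a(S)$ are called supported); $N_1(S)=\{u\in V\setminus S: |N[u]\cap S|=1\}$; $N_2(S)=\{u\in V\setminus S: |N[u]\cap S|\ge 2\}$; $a_1(S)=\{u\in a(S): N[u]\cap N_1(S)\ne\emptyset\}$; $a_2(S)=\{u\in a(S): N[u]\cap N_1(S)=\emptyset\}$. In a tree rooted at $v$, the depth of a vertex is its distance to $v$; $x$ is a descendant of $y$ if $y$ lies on the path from $x$ to $v$; child/grandchild means a descendant at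 distance one/two, and parent is the inverse of child. *)

theory Defs
  imports Main
begin

definition graph :: "'a set \<Rightarrow> ('a \<Rightarrow> 'a \<Rightarrow> bool) \<Rightarrow> bool" where
  "graph V E \<longleftrightarrow> finite V \<and> (\<forall>x y. E x y \<longrightarrow> x \<in> V \<and> y \<in> V)
      \<and> (\<forall>x y. E x y \<longrightarrow> E y x) \<and> (\<forall>x. \<not> E x x)"

definition gpath :: "('a \<Rightarrow> 'a \<Rightarrow> bool) \<Rightarrow> 'a list \<Rightarrow> 'a \<Rightarrow> 'a \<Rightarrow> bool" where
  "gpath E xs u w \<longleftrightarrow> xs \<noteq> [] \<and> distinct xs \<and> hd xs = u \<and> last xs = w
      \<and> (\<forall>i. Suc i < length xs \<longrightarrow> E (xs ! i) (xs ! Suc i))"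

definition connected :: "'a set \<Rightarrow> ('a \<Rightarrow> 'a \<Rightarrow> bool) \<Rightarrow> bool" where
  "connected V E \<longleftrightarrow> (\<forall>u\<in>V. \<forall>w\<in>V. \<exists>xs. gpath E xs u w)"

definition has_cycle :: "('a \<Rightarrow> 'a \<Rightarrow> bool) \<Rightarrow> bool" where
  "has_cycle E \<longleftrightarrow> (\<exists>xs. 3 \<le> length xs \<and> gpath E xs (hd xs) (last xs) \<and> E (last xs) (hd xs))"

definition tree :: "'a set \<Rightarrow> ('a \<Rightarrow> 'a \<Rightarrow> bool) \<Rightarrow> bool" where
  "tree V E \<longleftrightarrow> graph V E \<and> V \<noteq> {} \<and> connected V E \<and> \<not> has_cycle E"

definition gdist :: "('a \<Rightarrow> 'a \<Rightarrow> bool) \<Rightarrow> 'a \<Rightarrow> 'a \<Rightarrow> nat" where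
  "gdist E u w = (LEAST n. \<exists>xs. gpath E xs u w \<and> length xs = Suc n)"

definition depth :: "('a \<Rightarrow> 'a \<Rightarrow> bool) \<Rightarrow> 'a \<Rightarrow> 'a \<Rightarrow> nat" where
  "depth E r x = gdist E x r"

definition descendant :: "'a set \<Rightarrow> ('a \<Rightarrow> 'a \<Rightarrow> bool) \<Rightarrow> 'a \<Rightarrow> 'a \<Rightarrow> 'a \<Rightarrow> bool" where
  "descendant V E r x y \<longleftrightarrow> x \<in> V \<and> (\<exists>xs. gpath E xs x r \<and> y \<in> set xs)"

definition child :: "'a set \<Rightarrow> ('a \<Rightarrow> 'a \<Rightarrow> bool) \<Rightarrow> 'a \<Rightarrow> 'a \<Rightarrow> 'a \<Rightarrow> bool" where
  "child V E r x y \<longleftrightarrow> descendant V E r x y \<and> gdist E x y = 1"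

definition grandchild :: "'a set \<Rightarrow> ('a \<Rightarrow> 'a \<Rightarrow> bool) \<Rightarrow> 'a \<Rightarrow> 'a \<Rightarrow> 'a \<Rightarrow> bool" where
  "grandchild V E r x y \<longleftrightarrow> descendant V E r x y \<and> gdist E x y = 2"

definition parent :: "'a set \<Rightarrow> ('a \<Rightarrow> 'a \<Rightarrow> bool) \<Rightarrow> 'a \<Rightarrow> 'a \<Rightarrow> 'a \<Rightarrow> bool" where
  "parent V E r p x \<longleftrightarrow> child V E r x p"

definition nbh :: "'a set \<Rightarrow> ('a \<Rightarrow> 'a \<Rightarrow> bool) \<Rightarrow> 'a \<Rightarrow> 'a set" where
  "nbh V E x = {u\<in>V. E x u}"

definition cnbh :: "'a set \<Rightarrow> ('a \<Rightarrow> 'a \<Rightarrow> bool) \<Rightarrow> 'a \<Rightarrow> 'a set" where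
  "cnbh V E x = insert x (nbh V E x)"

definition nbh_set :: "'a set \<Rightarrow> ('a \<Rightarrow> 'a \<Rightarrow> bool) \<Rightarrow> 'a set \<Rightarrow> 'a set" where
  "nbh_set V E A = (\<Union>a\<in>A. nbh V E a)"

definition dominated_by :: "('a \<Rightarrow> 'a \<Rightarrow> bool) \<Rightarrow> 'a set \<Rightarrow> 'a \<Rightarrow> bool" where
  "dominated_by E S u \<longleftrightarrow> u \<in> S \<or> (\<exists>s\<in>S. E u s)"

definition dominating :: "'a set \<Rightarrow> ('a \<Rightarrow> 'a \<Rightarrow> bool) \<Rightarrow> 'a set \<Rightarrow> bool" where
  "dominating V E S \<longleftrightarrow> S \<subseteq> V \<and> (\<forall>u\<in>V. dominated_by E S u)"

text \<open>a(S): critical vertices.\<close>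
definition crit :: "'a set \<Rightarrow> ('a \<Rightarrow> 'a \<Rightarrow> bool) \<Rightarrow> 'a set \<Rightarrow> 'a set" where
  "crit V E S = {u\<in>S. \<not> dominating V E (S - {u})}"

definition N1 :: "'a set \<Rightarrow> ('a \<Rightarrow> 'a \<Rightarrow> bool) \<Rightarrow> 'a set \<Rightarrow> 'a set" where
  "N1 V E S = {u\<in>V - S. card (cnbh V E u \<inter> S) = 1}"

text \<open>a_1(S).\<close>
definition crit1 :: "'a set \<Rightarrow> ('a \<Rightarrow> 'a \<Rightarrow> bool) \<Rightarrow> 'a set \<Rightarrow> 'a set" where
  "crit1 V E S = {u\<in>crit V E S. cnbh V E u \<inter> N1 V E S \<noteq> {}}"

end

theory Submission
  imports Defs
begin

(* Each vertex of A has a private neighbour in N_1(S), and distinct vertices of A have distinct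
   private neighbours because a vertex of N_1(S) has only one neighbour in S; hence |S'| >= |S|.
   Everything else is depth bookkeeping in the rooted tree, resting on one fact: two distinct
   vertices of equal depth cannot be joined by a path through deeper vertices, since together with
   their shortest paths to the root it would close a cycle.  Consequently adjacent vertices differ
   in depth by exactly one and every vertex has at most one neighbour of smaller depth.  So a vertex
   below the level of A has at most one neighbour in A, the vertices of N (one level below A) are
   pairwise non-adjacent, and a critical vertex x of S that is supported in S' owes this to a private
   vertex u adjacent to some w in N; comparing depths along x - u - w puts x two levels below w,
   with u its parent. *)

fun walk :: "('a \<Rightarrow> 'a \<Rightarrow> bool) \<Rightarrow> 'a list \<Rightarrow> bool" where
  "walk E [] = True"
| "walk E [x] = True"
| "walk E (x # y # xs) = (E x y \<and> walk E (y # xs))"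

lemma walk_Cons: "walk E (x # xs) \<longleftrightarrow> walk E xs \<and> (xs \<noteq> [] \<longrightarrow> E x (hd xs))"
  by (cases xs) auto

lemma walk_iff_nth: "walk E xs \<longleftrightarrow> (\<forall>i. Suc i < length xs \<longrightarrow> E (xs ! i) (xs ! Suc i))"
proof (induction xs)
  case (Cons x xs)
  then show ?case
    by (cases xs) (auto simp: walk_Cons nth_Cons split: nat.splits)
qed simp

lemma gpath_iff_walk:
  "gpath E xs u w \<longleftrightarrow> xs \<noteq> [] \<and> distinct xs \<and> hd xs = u \<and> last xs = w \<and> walk E xs"
  by (simp add: gpath_def walk_iff_nth)

lemma walk_append:
  "walk E (xs @ ys) \<longleftrightarrow> walk E xs \<and> walk E ys \<and> (xs \<noteq> [] \<longrightarrow> ys \<noteq> [] \<longrightarrow> E (last xs) (hd ys))"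
  by (induction xs) (auto simp: walk_Cons)

lemma walk_rev: "(\<And>x y. E x y \<Longrightarrow> E y x) \<Longrightarrow> walk E (rev xs) \<longleftrightarrow> walk E xs"
  by (induction xs) (auto simp: walk_append walk_Cons last_rev)

lemma walk_take: "walk E xs \<Longrightarrow> walk E (take n xs)"
  using walk_append[of E "take n xs" "drop n xs"] by simp

lemma walk_drop: "walk E xs \<Longrightarrow> walk E (drop n xs)"
  using walk_append[of E "take n xs" "drop n xs"] by simp

lemma walk_append_tl:
  "walk E xs \<Longrightarrow> walk E ys \<Longrightarrow> xs \<noteq> [] \<Longrightarrow> last xs = hd ys \<Longrightarrow> walk E (xs @ tl ys)"
  by (cases ys) (auto simp: walk_append walk_Cons)

lemma last_append_tl: "ys \<noteq> [] \<Longrightarrow> last xs = hd ys \<Longrightarrow> xs \<noteq> [] \<Longrightarrow> last (xs @ tl ys) = last ys"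
  by (cases ys) auto

lemma walk_shortens_to_gpath:
  "walk E xs \<Longrightarrow> xs \<noteq> [] \<Longrightarrow> \<exists>ys. gpath E ys (hd xs) (last xs) \<and> length ys \<le> length xs"
proof (induction "length xs" arbitrary: xs rule: less_induct)
  case less
  show ?case
  proof (cases "distinct xs")
    case True
    then show ?thesis using less.prems by (auto simp: gpath_iff_walk)
  next
    case False
    then obtain a v b c where xs: "xs = a @ [v] @ b @ [v] @ c" using not_distinct_decomp by blast
    let ?ys = "a @ [v] @ c"
    have "walk E (a @ [v])" "walk E ([v] @ c)"
      using less.prems(1) unfolding xs by (metis append.assoc walk_append)+
    then have "walk E ?ys"
      by (cases c) (auto simp: walk_append)
    moreover have "hd ?ys = hd xs" "last ?ys = last xs" unfolding xs by (cases a; cases c; simp)+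
    moreover have "length ?ys < length xs" unfolding xs by simp
    ultimately show ?thesis using less.hyps[of ?ys] by fastforce
  qed
qed

lemma gdist_le_walk:
  assumes "walk E xs" "xs \<noteq> []" "hd xs = u" "last xs = w"
  shows "gdist E u w \<le> length xs - 1"
proof -
  obtain ys where ys: "gpath E ys u w" "length ys \<le> length xs"
    using walk_shortens_to_gpath assms by blast
  then have "gdist E u w \<le> length ys - 1"
    unfolding gdist_def by (intro Least_le) (auto simp: gpath_def)
  then show ?thesis using ys by simp
qed

lemma gpath_length_gdist:
  assumes "gpath E xs u w"
  shows "\<exists>ys. gpath E ys u w \<and> length ys = Suc (gdist E u w)"
proof -
  have "\<exists>n ys. gpath E ys u w \<and> length ys = Suc n"
    using assms by (metis Suc_pred gpath_def length_greater_0_conv)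
  then show ?thesis unfolding gdist_def by (rule LeastI_ex)
qed

lemma has_cycle_if_closed_walk:
  assumes "walk E xs" "hd xs = last xs" "distinct (tl xs)" "4 \<le> length xs"
  shows "has_cycle E"
proof -
  obtain x ys where xs: "xs = x # ys" using assms(4) by (cases xs) auto
  have "ys \<noteq> []" using assms(4) xs by auto
  then have "gpath E ys (hd ys) (last ys)" "E (last ys) (hd ys)" "3 \<le> length ys"
    using assms xs by (auto simp: gpath_iff_walk walk_Cons)
  then show ?thesis unfolding has_cycle_def by blast
qed

lemma gpath_take:
  assumes "gpath E xs u w" "i < length xs"
  shows "gpath E (take (Suc i) xs) u (xs ! i)"
proof -
  have "last (take (Suc i) xs) = xs ! i"
    using assms(2) by (simp add: take_Suc_conv_app_nth)
  then show ?thesis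
    using assms walk_take[of E xs "Suc i"] by (auto simp: gpath_iff_walk)
qed

lemma has_cycle_if_three_paths:
  assumes sym: "\<And>x y. E x y \<Longrightarrow> E y x"
    and L: "gpath E L q p" and P: "gpath E P p m" and Q: "gpath E Q q m"
    and LP: "set L \<inter> set P = {p}" and LQ: "set L \<inter> set Q = {q}" and PQ: "set P \<inter> set Q = {m}"
    and "p \<noteq> m" "q \<noteq> m"
  shows "has_cycle E"
proof -
  obtain L' where L': "L = q # L'" using L by (cases L) (auto simp: gpath_iff_walk)
  obtain P' where P': "P = p # P'" using P by (cases P) (auto simp: gpath_iff_walk)
  obtain Q' where Q': "rev Q = m # Q'" using Q by (cases "rev Q") (auto simp: gpath_iff_walk hd_rev)
  have "p \<noteq> q" using PQ P Q \<open>p \<noteq> m\<close> by (metis IntI gpath_iff_walk hd_in_set singletonD)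
  have "walk E (L @ P')" "last (L @ P') = m"
    using L P L' P' walk_append_tl[of E L P] \<open>p \<noteq> m\<close> by (auto simp: gpath_iff_walk)
  moreover have "walk E (rev Q)" using Q sym by (simp add: gpath_iff_walk walk_rev)
  ultimately have "walk E (L @ P' @ Q')"
    using walk_append_tl[of E "L @ P'" "rev Q"] Q' L' by simp
  moreover have "last (L @ P' @ Q') = q"
    using Q Q' \<open>q \<noteq> m\<close> \<open>last (L @ P') = m\<close> by (cases Q' rule: rev_cases) (auto simp: gpath_iff_walk last_rev)
  moreover have "distinct (L' @ P' @ Q')"
    using L P Q L' P' Q' LP LQ PQ
    by (auto simp: gpath_iff_walk dest: arg_cong[of _ _ set] arg_cong[of _ _ distinct])
  moreover have "P' \<noteq> []" "Q' \<noteq> []" "L' \<noteq> []"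
    using P P' Q Q' L L' \<open>p \<noteq> m\<close> \<open>q \<noteq> m\<close> \<open>p \<noteq> q\<close> by (auto simp: gpath_iff_walk last_rev)
  then have "4 \<le> length (L @ P' @ Q')"
    using L' by (simp add: Suc_le_eq flip: length_greater_0_conv)
  ultimately show ?thesis
    using has_cycle_if_closed_walk[of E "L @ P' @ Q'"] L' by simp
qed

locale rooted_tree =
  fixes V :: "'a set" and E :: "'a \<Rightarrow> 'a \<Rightarrow> bool" and r :: 'a
  assumes tree: "tree V E" and root: "r \<in> V"
begin

lemma graph: "graph V E"
  using tree by (simp add: tree_def)

lemma adj_in_V: "E x y \<Longrightarrow> x \<in> V \<and> y \<in> V"
  using graph by (simp add: graph_def)

lemma adj_sym: "E x y \<Longrightarrow> E y x"
  using graph by (simp add: graph_def)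

lemma adj_irrefl: "\<not> E x x"
  using graph by (simp add: graph_def)

lemma shortest_gpath: "u \<in> V \<Longrightarrow> w \<in> V \<Longrightarrow> \<exists>xs. gpath E xs u w \<and> length xs = Suc (gdist E u w)"
  using tree gpath_length_gdist by (fastforce simp: tree_def connected_def)

lemma shortest_root_path: "x \<in> V \<Longrightarrow> \<exists>P. gpath E P x r \<and> length P = Suc (depth E r x)"
  unfolding depth_def using shortest_gpath root by blast

lemma gpath_subset_V:
  assumes "gpath E xs u w" "u \<in> V"
  shows "set xs \<subseteq> V"
proof
  fix x assume "x \<in> set xs"
  then obtain i where i: "i < length xs" "xs ! i = x" by (auto simp: in_set_conv_nth)
  show "x \<in> V"
  proof (cases i)
    case 0
    then show ?thesis using assms i by (auto simp: gpath_def hd_conv_nth)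
  next
    case (Suc j)
    then have "E (xs ! j) (xs ! i)" using assms(1) i by (auto simp: gpath_def)
    then show ?thesis using adj_in_V i by blast
  qed
qed

lemma gdist_triangle:
  assumes "u \<in> V" "v \<in> V" "w \<in> V"
  shows "gdist E u w \<le> gdist E u v + gdist E v w"
proof -
  obtain P where P: "gpath E P u v" "length P = Suc (gdist E u v)"
    using shortest_gpath assms by blast
  obtain Q where Q: "gpath E Q v w" "length Q = Suc (gdist E v w)"
    using shortest_gpath assms by blast
  have "gdist E u w \<le> length (P @ tl Q) - 1"
    using P Q by (intro gdist_le_walk walk_append_tl) (auto simp: gpath_iff_walk last_append_tl)
  then show ?thesis using P Q by simp
qed

lemma depth_adj_le: "E x y \<Longrightarrow> depth E r x \<le> Suc (depth E r y)"
  using gdist_le_walk[of E "[x, y]" x y] gdist_triangle[of x y r] adj_in_V root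
  by (fastforce simp: depth_def)

lemma depth_shortest_root_path_nth:
  assumes P: "gpath E P x r" "length P = Suc (depth E r x)" and x: "x \<in> V" and k: "k < length P"
  shows "depth E r (P ! k) + k = depth E r x"
proof -
  have walk: "walk E P" and Pk: "P ! k \<in> V"
    using P gpath_subset_V[OF P(1) x] k by (auto simp: gpath_iff_walk)
  have "gdist E (P ! k) r \<le> length (drop k P) - 1"
    using P k walk_drop[OF walk] by (intro gdist_le_walk) (auto simp: gpath_iff_walk hd_drop_conv_nth)
  then have "depth E r (P ! k) + k \<le> depth E r x"
    using P(2) k by (simp add: depth_def)
  moreover have "last (take (Suc k) P) = P ! k"
    using k by (simp add: take_Suc_conv_app_nth)
  then have "gdist E x (P ! k) \<le> length (take (Suc k) P) - 1"
    using P k walk_take[OF walk] by (intro gdist_le_walk) (auto simp: gpath_iff_walk)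
  then have "depth E r x \<le> k + depth E r (P ! k)"
    using gdist_triangle[OF x Pk root] k by (simp add: depth_def)
  ultimately show ?thesis by simp
qed

lemma depth_shortest_root_path_less:
  assumes "gpath E P x r" "length P = Suc (depth E r x)" "x \<in> V" "v \<in> set P" "v \<noteq> x"
  shows "depth E r v < depth E r x"
proof -
  obtain k where "k < length P" "P ! k = v"
    using assms(4) by (auto simp: in_set_conv_nth)
  moreover have "k \<noteq> 0"
    using assms(1,5) \<open>P ! k = v\<close> by (metis gpath_iff_walk hd_conv_nth)
  ultimately show ?thesis
    using depth_shortest_root_path_nth[OF assms(1-3)] by fastforce
qed

lemma shortest_root_paths_meet:
  assumes P: "gpath E P p r" "length P = Suc (depth E r p)"
    and Q: "gpath E Q q r" "length Q = Suc (depth E r q)"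
    and "p \<in> V" "q \<in> V" and same: "depth E r p = depth E r q"
  obtains i where "i < length P" "P ! i = Q ! i"
    "set (take (Suc i) P) \<inter> set (take (Suc i) Q) = {P ! i}"
proof -
  define d where "d = depth E r p"
  have depth_P: "depth E r (P ! k) + k = d" if "k \<le> d" for k
    using depth_shortest_root_path_nth[OF P \<open>p \<in> V\<close>, of k] P(2) that by (simp add: d_def)
  have depth_Q: "depth E r (Q ! k) + k = d" if "k \<le> d" for k
    using depth_shortest_root_path_nth[OF Q \<open>q \<in> V\<close>, of k] Q(2) same that by (simp add: d_def)
  have "P ! d = Q ! d"
    using P Q same by (metis d_def diff_Suc_1 gpath_iff_walk last_conv_nth)
  define i where "i = (LEAST i. P ! i = Q ! i)"
  have meet: "P ! i = Q ! i" and "i \<le> d"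
    using LeastI[of "\<lambda>i. P ! i = Q ! i"] Least_le[of "\<lambda>i. P ! i = Q ! i"] \<open>P ! d = Q ! d\<close>
    by (auto simp: i_def)
  have in_take: "\<exists>k\<le>i. v = xs ! k" if "v \<in> set (take (Suc i) xs)" for v and xs :: "'a list"
    using that by (auto simp: in_set_conv_nth less_Suc_eq_le)
  have "v = P ! i" if vP: "v \<in> set (take (Suc i) P)" and vQ: "v \<in> set (take (Suc i) Q)" for v
  proof -
    obtain k where "k \<le> i" "v = P ! k" using in_take[OF vP] by blast
    obtain j where "j \<le> i" "v = Q ! j" using in_take[OF vQ] by blast
    have "k = j"
      using \<open>v = P ! k\<close> \<open>v = Q ! j\<close> depth_P[of k] depth_Q[of j] \<open>k \<le> i\<close> \<open>j \<le> i\<close> \<open>i \<le> d\<close>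
      by simp
    then have "P ! j = Q ! j"
      using \<open>v = P ! k\<close> \<open>v = Q ! j\<close> by simp
    then have "\<not> j < i"
      unfolding i_def by (meson not_less_Least)
    then show ?thesis using \<open>k = j\<close> \<open>j \<le> i\<close> \<open>v = P ! k\<close> by simp
  qed
  moreover have "P ! i \<in> set (take (Suc i) P)" "P ! i \<in> set (take (Suc i) Q)"
    using P Q meet \<open>i \<le> d\<close> same by (auto simp: in_set_conv_nth d_def)
  ultimately have "set (take (Suc i) P) \<inter> set (take (Suc i) Q) = {P ! i}"
    by blast
  then show ?thesis
    using that[OF _ meet] \<open>i \<le> d\<close> P(2) by (simp add: d_def)
qed

lemma equal_depth_not_linked_below:
  assumes "p \<in> V" "q \<in> V" "p \<noteq> q" and same: "depth E r p = depth E r q"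
    and L: "gpath E L q p" and below: "\<forall>v\<in>set L - {p, q}. depth E r p < depth E r v"
  shows False
proof -
  obtain P where P: "gpath E P p r" "length P = Suc (depth E r p)"
    using shortest_root_path assms(1) by blast
  obtain Q where Q: "gpath E Q q r" "length Q = Suc (depth E r q)"
    using shortest_root_path assms(2) by blast
  obtain i where "i < length P" and meet: "P ! i = Q ! i"
    and PQ: "set (take (Suc i) P) \<inter> set (take (Suc i) Q) = {P ! i}"
    using shortest_root_paths_meet[OF P Q assms(1,2) same] by blast
  have "i < length Q" using \<open>i < length P\<close> P(2) Q(2) same by simp
  have in_L: "depth E r p \<le> depth E r v" if "v \<in> set L" for v
    using that below same by (cases "v \<in> {p, q}") (auto simp: less_imp_le)
  have "P ! 0 = p" "Q ! 0 = q" "p \<in> set L" "q \<in> set L"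
    using P Q L by (metis gpath_iff_walk hd_conv_nth hd_in_set last_in_set)+
  have LP: "set L \<inter> set (take (Suc i) P) = {p}"
  proof -
    have "v = p" if "v \<in> set L" "v \<in> set (take (Suc i) P)" for v
      using depth_shortest_root_path_less[OF P assms(1)] in_L[OF that(1)] that(2)
      by (meson in_set_takeD leD)
    moreover have "p \<in> set (take (Suc i) P)"
      using \<open>P ! 0 = p\<close> \<open>i < length P\<close> by (force simp: in_set_conv_nth)
    ultimately show ?thesis using \<open>p \<in> set L\<close> by blast
  qed
  have LQ: "set L \<inter> set (take (Suc i) Q) = {q}"
  proof -
    have "v = q" if "v \<in> set L" "v \<in> set (take (Suc i) Q)" for v
      using depth_shortest_root_path_less[OF Q assms(2)] in_L[OF that(1)] that(2) same
      by (metis in_set_takeD leD)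
    moreover have "q \<in> set (take (Suc i) Q)"
      using \<open>Q ! 0 = q\<close> \<open>i < length Q\<close> by (force simp: in_set_conv_nth)
    ultimately show ?thesis using \<open>q \<in> set L\<close> by blast
  qed
  have "i \<noteq> 0"
    using meet \<open>P ! 0 = p\<close> \<open>Q ! 0 = q\<close> \<open>p \<noteq> q\<close> by metis
  then have "P ! 0 \<noteq> P ! i" "Q ! 0 \<noteq> Q ! i"
    using P Q \<open>i < length P\<close> \<open>i < length Q\<close> by (simp_all add: gpath_iff_walk nth_eq_iff_index_eq)
  then have "p \<noteq> P ! i" "q \<noteq> P ! i"
    using meet \<open>P ! 0 = p\<close> \<open>Q ! 0 = q\<close> by simp_all
  moreover have "gpath E (take (Suc i) P) p (P ! i)" "gpath E (take (Suc i) Q) q (P ! i)"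
    using gpath_take[OF P(1) \<open>i < length P\<close>] gpath_take[OF Q(1) \<open>i < length Q\<close>] meet by simp_all
  ultimately have "has_cycle E"
    using has_cycle_if_three_paths[OF adj_sym L _ _ LP LQ PQ] by blast
  then show False
    using tree by (simp add: tree_def)
qed

lemma depth_adj_neq: "E x y \<Longrightarrow> depth E r x \<noteq> depth E r y"
  using equal_depth_not_linked_below[of x y "[y, x]"] adj_in_V adj_sym adj_irrefl
  by (fastforce simp: gpath_iff_walk)

lemma depth_adj: "E x y \<Longrightarrow> depth E r x = Suc (depth E r y) \<or> depth E r y = Suc (depth E r x)"
  using depth_adj_le[of x y] depth_adj_le[of y x] depth_adj_neq[of x y] adj_sym[of x y] by linarith

lemma lower_neighbour_unique:
  assumes "E x p" "E x q" "depth E r x = Suc (depth E r p)" "depth E r x = Suc (depth E r q)"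
  shows "p = q"
proof (rule ccontr)
  assume "p \<noteq> q"
  moreover have "gpath E [q, x, p] q p"
    using assms \<open>p \<noteq> q\<close> adj_sym by (auto simp: gpath_iff_walk)
  moreover have "\<forall>v\<in>set [q, x, p] - {p, q}. depth E r p < depth E r v"
    using assms(3) by auto
  ultimately show False
    using equal_depth_not_linked_below[of p q "[q, x, p]"] assms adj_in_V by auto
qed

lemma root_path_is_shortest:
  assumes "gpath E P x r" "x \<in> V"
  shows "length P = Suc (depth E r x)"
  using assms
proof (induction P arbitrary: x)
  case Nil
  then show ?case by (simp add: gpath_iff_walk)
next
  case (Cons x' P)
  show ?case
  proof (cases P)
    case Nil
    then show ?thesis
      using Cons.prems gdist_le_walk[of E "[r]" r r] by (auto simp: gpath_iff_walk depth_def)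
  next
    case (Cons y P'')
    have "x' = x" "E x y" "x \<notin> set P" and y_path: "gpath E P y r"
      using Cons.prems \<open>P = y # P''\<close> by (auto simp: gpath_iff_walk walk_Cons)
    have "y \<in> V" using adj_in_V \<open>E x y\<close> by blast
    have len_P: "length P = Suc (depth E r y)" using Cons.IH[OF y_path \<open>y \<in> V\<close>] .
    have "depth E r x = Suc (depth E r y)"
    proof (rule ccontr)
      assume "depth E r x \<noteq> Suc (depth E r y)"
      then have up: "depth E r y = Suc (depth E r x)" using depth_adj[OF \<open>E x y\<close>] by simp
      then have "1 < length P" using len_P by simp
      have "E (P ! 0) (P ! 1)" "P ! 0 = y"
        using y_path \<open>1 < length P\<close> by (auto simp: gpath_def hd_conv_nth)
      moreover have "depth E r (P ! 1) + 1 = depth E r y"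
        using depth_shortest_root_path_nth[OF y_path len_P \<open>y \<in> V\<close> \<open>1 < length P\<close>] .
      ultimately have "P ! 1 = x"
        using lower_neighbour_unique[of y "P ! 1" x] up adj_sym \<open>E x y\<close> by simp
      then show False using \<open>x \<notin> set P\<close> \<open>1 < length P\<close> nth_mem by metis
    qed
    then show ?thesis using len_P by simp
  qed
qed

lemma descendant_depth:
  assumes "descendant V E r x y"
  shows "y \<in> V" "x \<in> V" "depth E r y \<le> depth E r x" "x \<noteq> y \<Longrightarrow> depth E r y < depth E r x"
proof -
  obtain P where P: "gpath E P x r" "y \<in> set P" and x: "x \<in> V"
    using assms by (auto simp: descendant_def)
  then obtain k where k: "k < length P" "P ! k = y" by (auto simp: in_set_conv_nth)
  have "depth E r y + k = depth E r x"
    using depth_shortest_root_path_nth[OF P(1) root_path_is_shortest[OF P(1) x] x k(1)] k(2) by simp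
  moreover have "x \<noteq> y \<Longrightarrow> k \<noteq> 0"
    using P k by (metis gpath_iff_walk hd_conv_nth)
  ultimately show "y \<in> V" "x \<in> V" "depth E r y \<le> depth E r x" "x \<noteq> y \<Longrightarrow> depth E r y < depth E r x"
    using x gpath_subset_V[OF P(1) x] P(2) by auto
qed

lemma adj_if_gdist_1:
  assumes "u \<in> V" "w \<in> V" "gdist E u w = 1"
  shows "E u w"
proof -
  obtain xs where "gpath E xs u w" "length xs = 2"
    using shortest_gpath assms by fastforce
  then show ?thesis
    by (auto simp: gpath_def hd_conv_nth last_conv_nth)
qed

lemma eq_if_gdist_0:
  assumes "u \<in> V" "w \<in> V" "gdist E u w = 0"
  shows "u = w"
proof -
  obtain xs where "gpath E xs u w" "length xs = 1"
    using shortest_gpath assms by fastforce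
  then show ?thesis
    by (auto simp: gpath_def hd_conv_nth last_conv_nth)
qed

lemma child_adj_depth:
  assumes "child V E r x y"
  shows "E x y" "depth E r x = Suc (depth E r y)"
proof -
  have desc: "descendant V E r x y" and "gdist E x y = 1"
    using assms by (auto simp: child_def)
  then show "E x y"
    using adj_if_gdist_1 descendant_depth(1,2) by blast
  then show "depth E r x = Suc (depth E r y)"
    using depth_adj descendant_depth(3)[OF desc] by fastforce
qed

lemma grandchild_intro:
  assumes "E x u" "E u w" "depth E r u = Suc (depth E r w)" "depth E r x = Suc (depth E r u)"
  shows "grandchild V E r x w"
proof -
  have V: "x \<in> V" "u \<in> V" "w \<in> V" using adj_in_V assms(1,2) by auto
  obtain P where P: "gpath E P w r" "length P = Suc (depth E r w)"
    using shortest_root_path V by blast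
  have "x \<notin> set P" "u \<notin> set P"
    using depth_shortest_root_path_less[OF P V(3)] assms(3,4) by force+
  moreover have "x \<noteq> u" using assms(1) adj_irrefl by auto
  ultimately have "gpath E (x # u # P) x r" using P assms(1,2)
    by (cases P) (auto simp: gpath_iff_walk walk_Cons)
  moreover have "w \<in> set P" using P by (cases P) (auto simp: gpath_iff_walk)
  ultimately have "descendant V E r x w" using V by (auto simp: descendant_def)
  moreover have "gdist E x w \<le> 2" using gdist_le_walk[of E "[x, u, w]" x w] assms(1,2) by simp
  moreover have "gdist E x w \<noteq> 0"
    using eq_if_gdist_0[OF V(1,3)] assms(3,4) by force
  moreover have "gdist E x w \<noteq> 1"
    using adj_if_gdist_1[OF V(1,3)] depth_adj[of x w] assms(3,4) by auto
  ultimately show ?thesis by (simp add: grandchild_def)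
qed

end

lemma N1_neighbour_in_S_unique:
  assumes "S \<subseteq> V" "u \<in> N1 V E S" "s \<in> S" "t \<in> S" "E u s" "E u t"
  shows "s = t"
proof -
  have "s \<in> cnbh V E u \<inter> S" "t \<in> cnbh V E u \<inter> S" "card (cnbh V E u \<inter> S) = 1"
    using assms by (auto simp: cnbh_def nbh_def N1_def)
  then show ?thesis by (metis card_1_singletonE singletonD)
qed

lemma crit1_private_neighbour:
  assumes "a \<in> crit1 V E S"
  shows "\<exists>w\<in>N1 V E S. E a w"
proof -
  obtain w where w: "w \<in> cnbh V E a" "w \<in> N1 V E S"
    using assms by (auto simp: crit1_def)
  have "w \<noteq> a" using w(2) assms by (auto simp: N1_def crit1_def crit_def)
  then show ?thesis using w by (auto simp: cnbh_def nbh_def)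
qed

lemma second_neighbour_in_S_if_not_N1:
  assumes "S \<subseteq> V" "x \<in> V - S" "x \<notin> N1 V E S" "s \<in> S" "E x s"
  obtains t where "t \<in> S" "t \<noteq> s" "E x t"
proof -
  have "card (cnbh V E x \<inter> S) \<noteq> 1"
    using assms(2,3) by (simp add: N1_def)
  moreover have "s \<in> cnbh V E x \<inter> S"
    using assms by (auto simp: cnbh_def nbh_def)
  ultimately have "cnbh V E x \<inter> S \<noteq> {s}"
    by auto
  then obtain t where "t \<in> cnbh V E x \<inter> S" "t \<noteq> s"
    using \<open>s \<in> cnbh V E x \<inter> S\<close> by blast
  then show ?thesis
    using that assms(2) by (auto simp: cnbh_def nbh_def)
qed

lemma card_le_exchange:
  assumes "graph V E" "S \<subseteq> V" "A \<subseteq> crit1 V E S"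
  shows "card S \<le> card (S - A \<union> (nbh_set V E A \<inter> N1 V E S))"
proof -
  define N where "N = nbh_set V E A \<inter> N1 V E S"
  have sym: "\<And>x y. E x y \<Longrightarrow> E y x" and "finite V"
    using assms(1) by (auto simp: graph_def)
  have "A \<subseteq> S" using assms(3) by (auto simp: crit1_def crit_def)
  have fin: "finite S" "finite N"
    using \<open>finite V\<close> assms(2) finite_subset by (auto simp: N_def N1_def)
  obtain f where f: "\<And>a. a \<in> A \<Longrightarrow> f a \<in> N1 V E S \<and> E a (f a)"
    using crit1_private_neighbour assms(3) by (metis subsetD)
  have "inj_on f A"
  proof (rule inj_onI)
    fix a b assume "a \<in> A" "b \<in> A" "f a = f b"
    then show "a = b"
      using N1_neighbour_in_S_unique[OF assms(2), where u = "f a" and s = a and t = b] f sym \<open>A \<subseteq> S\<close> by (metis subsetD)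
  qed
  moreover have "f ` A \<subseteq> N"
    using f assms(2) \<open>A \<subseteq> S\<close> by (fastforce simp: N_def nbh_set_def nbh_def N1_def)
  ultimately have "card A \<le> card N"
    using card_inj_on_le fin by blast
  moreover have "N \<inter> S = {}" by (auto simp: N_def N1_def)
  then have "card (S - A \<union> N) = card (S - A) + card N"
    using fin by (intro card_Un_disjoint) auto
  moreover have "card (S - A) = card S - card A"
    using fin \<open>A \<subseteq> S\<close> by (meson card_Diff_subset finite_subset)
  moreover have "card A \<le> card S"
    using fin \<open>A \<subseteq> S\<close> card_mono by blast
  ultimately show ?thesis by (simp add: N_def)
qed

locale level_exchange = rooted_tree +
  fixes S A N S' :: "'a set"
  assumes dominating: "dominating V E S"
    and A_crit1: "A \<subseteq> crit1 V E S"
    and A_level: "\<forall>y\<in>A. \<forall>z\<in>A. depth E r y = depth E r z"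
    and N_eq: "N = nbh_set V E A \<inter> N1 V E S"
    and S'_eq: "S' = S - A \<union> N"
begin

lemma S_subset_V: "S \<subseteq> V"
  using dominating by (simp add: dominating_def)

lemma A_subset_S: "A \<subseteq> S"
  using A_crit1 by (auto simp: crit1_def crit_def)

lemma N_disjoint_S: "N \<inter> S = {}"
  by (auto simp: N_eq N1_def)

lemma A_private_neighbour:
  assumes "a \<in> A"
  shows "\<exists>w\<in>N. E a w"
proof -
  obtain w where w: "w \<in> N1 V E S" "E a w"
    using crit1_private_neighbour[of a V E S] A_crit1 assms by auto
  then have "w \<in> nbh_set V E A"
    using assms unfolding nbh_set_def nbh_def N1_def by blast
  then show ?thesis
    using w by (auto simp: N_eq)
qed

lemma N_neighbour_in_S:
  assumes "w \<in> N" "s \<in> S" "E w s"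
  shows "s \<in> A"
proof -
  obtain a where "a \<in> A" "E a w" "w \<in> N1 V E S"
    using assms(1) by (auto simp: N_eq nbh_set_def nbh_def)
  then have "s = a"
    using N1_neighbour_in_S_unique[OF S_subset_V, where u = w and s = s and t = a]
      A_subset_S adj_sym assms(2,3) by auto
  then show ?thesis using \<open>a \<in> A\<close> by simp
qed

lemma A_neighbour_below_unique:
  assumes "y \<in> A" "depth E r y < depth E r x" "a \<in> A" "b \<in> A" "E x a" "E x b"
  shows "a = b"
proof -
  have "depth E r x = Suc (depth E r c)" if "c \<in> A" "E x c" for c
  proof -
    have "depth E r c = depth E r y" using A_level assms(1) that(1) by blast
    then show ?thesis using depth_adj[OF \<open>E x c\<close>] assms(2) by linarith
  qed
  from this[of a] this[of b] show ?thesis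
    using lower_neighbour_unique[of x a b] assms(3-6) by simp
qed

lemma descendant_of_A_dominated:
  assumes "y \<in> A" "descendant V E r x y"
  shows "dominated_by E S' x"
proof (cases "x = y")
  case True
  obtain w where "w \<in> N" "E y w"
    using A_private_neighbour[OF assms(1)] by blast
  then show ?thesis
    using True by (auto simp: dominated_by_def S'_eq)
next
  case False
  have "x \<in> V" and below: "depth E r y < depth E r x"
    using descendant_depth(2,4)[OF assms(2)] False by blast+
  have "x \<notin> A"
  proof
    assume "x \<in> A"
    then have "depth E r x = depth E r y" using A_level assms(1) by blast
    then show False using below by simp
  qed
  show ?thesis
  proof (cases "x \<in> S")
    case True
    then show ?thesis using \<open>x \<notin> A\<close> by (simp add: dominated_by_def S'_eq)
  next
    case False
    then obtain s where s: "s \<in> S" "E x s"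
      using dominating \<open>x \<in> V\<close> by (auto simp: dominating_def dominated_by_def)
    show ?thesis
    proof (cases "s \<in> A \<and> x \<notin> N")
      case True
      have "x \<in> nbh_set V E A"
        using True s(2) adj_sym \<open>x \<in> V\<close> unfolding nbh_set_def nbh_def by blast
      then have "x \<notin> N1 V E S"
        using True by (simp add: N_eq)
      moreover have "x \<in> V - S"
        using \<open>x \<in> V\<close> \<open>x \<notin> S\<close> by blast
      ultimately obtain t where "t \<in> S" "t \<noteq> s" "E x t"
        using second_neighbour_in_S_if_not_N1[OF S_subset_V] s by blast
      then have "t \<notin> A"
        using A_neighbour_below_unique[OF assms(1) below, of s t] True s(2) by blast
      then show ?thesis
        using \<open>t \<in> S\<close> \<open>E x t\<close> by (auto simp: dominated_by_def S'_eq)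
    next
      case False
      then show ?thesis using s by (auto simp: dominated_by_def S'_eq)
    qed
  qed
qed

lemma N_child_of_A:
  assumes children: "\<forall>w\<in>N. \<exists>y\<in>A. child V E r w y" and "w \<in> N"
  obtains y where "y \<in> A" "E w y" "depth E r w = Suc (depth E r y)"
proof -
  obtain y where "y \<in> A" "child V E r w y"
    using children assms(2) by blast
  then show ?thesis using that child_adj_depth by blast
qed

lemma N_isolated_in_S':
  assumes children: "\<forall>w\<in>N. \<exists>y\<in>A. child V E r w y"
    and "w \<in> N" "s \<in> S'" "s \<noteq> w"
  shows "\<not> E w s"
proof
  assume "E w s"
  show False
  proof (cases "s \<in> N")
    case True
    obtain y where "y \<in> A" "depth E r w = Suc (depth E r y)"
      using N_child_of_A[OF children \<open>w \<in> N\<close>] by blast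
    moreover obtain z where "z \<in> A" "depth E r s = Suc (depth E r z)"
      using N_child_of_A[OF children \<open>s \<in> N\<close>] by blast
    moreover have "depth E r y = depth E r z"
      using A_level \<open>y \<in> A\<close> \<open>z \<in> A\<close> by blast
    ultimately have "depth E r w = depth E r s"
      by simp
    then show False using depth_adj_neq[OF \<open>E w s\<close>] by simp
  next
    case False
    then have "s \<in> S - A" using \<open>s \<in> S'\<close> by (simp add: S'_eq)
    then show False using N_neighbour_in_S[OF \<open>w \<in> N\<close> _ \<open>E w s\<close>] by blast
  qed
qed

lemma N_subset_crit:
  assumes children: "\<forall>w\<in>N. \<exists>y\<in>A. child V E r w y"
  shows "N \<subseteq> crit V E S'"
proof
  fix w assume "w \<in> N"
  then have "\<not> dominated_by E (S' - {w}) w"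
    using N_isolated_in_S'[OF children \<open>w \<in> N\<close>] by (auto simp: dominated_by_def)
  moreover have "w \<in> V" "w \<in> S'"
    using \<open>w \<in> N\<close> by (auto simp: N_eq N1_def S'_eq)
  ultimately show "w \<in> crit V E S'"
    by (auto simp: crit_def dominating_def)
qed

lemma vertex_privately_dominated_through_N:
  assumes children: "\<forall>w\<in>N. \<exists>y\<in>A. child V E r w y"
    and "x \<in> crit V E S" "x \<in> S'" "dominating V E (S' - {x})"
  obtains u w where "E x u" "u \<notin> S" "u \<notin> N" "w \<in> N" "E u w"
proof -
  have "x \<in> S" using assms(2) by (simp add: crit_def)
  then have "x \<notin> A" using assms(3) N_disjoint_S by (auto simp: S'_eq)
  obtain u where "u \<in> V" and u_private: "\<not> dominated_by E (S - {x}) u"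
    using assms(2) S_subset_V by (auto simp: crit_def dominating_def)
  have "u \<notin> N"
  proof
    assume "u \<in> N"
    then obtain a where "a \<in> A" "E a u" by (auto simp: N_eq nbh_set_def nbh_def)
    then show False
      using u_private \<open>x \<notin> A\<close> A_subset_S adj_sym by (auto simp: dominated_by_def)
  qed
  have "dominated_by E (S' - {x}) u"
    using assms(4) \<open>u \<in> V\<close> by (simp add: dominating_def)
  moreover have "u \<notin> S' - {x}"
    using u_private \<open>u \<notin> N\<close> by (auto simp: dominated_by_def S'_eq)
  ultimately obtain w where "w \<in> S' - {x}" "E u w"
    by (auto simp: dominated_by_def)
  then have "w \<in> N" using u_private by (auto simp: S'_eq dominated_by_def)
  have "u \<notin> S"
  proof
    assume "u \<in> S"
    then have "u = x" using u_private by (auto simp: dominated_by_def)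
    then show False
      using N_isolated_in_S'[OF children \<open>w \<in> N\<close> assms(3)] \<open>w \<in> S' - {x}\<close> \<open>E u w\<close> adj_sym
      by auto
  qed
  then obtain t where "t \<in> S" "E u t"
    using dominating \<open>u \<in> V\<close> by (auto simp: dominating_def dominated_by_def)
  then have "E x u" using u_private adj_sym by (auto simp: dominated_by_def)
  then show ?thesis using that \<open>u \<notin> S\<close> \<open>u \<notin> N\<close> \<open>w \<in> N\<close> \<open>E u w\<close> by blast
qed

lemma uncritical_vertex_below_N:
  assumes children: "\<forall>w\<in>N. \<exists>y\<in>A. child V E r w y"
    and "dominating V E S'" "x \<in> crit V E S" "x \<in> S' - crit V E S'"
  shows "(\<exists>w\<in>N. grandchild V E r x w) \<and> (\<forall>p. parent V E r p x \<longrightarrow> p \<notin> S')"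
proof -
  have "x \<in> S'" "dominating V E (S' - {x})"
    using assms(4) by (auto simp: crit_def)
  then obtain u w where u: "E x u" "u \<notin> S" "u \<notin> N" and w: "w \<in> N" "E u w"
    using vertex_privately_dominated_through_N[OF children assms(3)] by metis
  obtain y where y: "y \<in> A" "E w y" "depth E r w = Suc (depth E r y)"
    using N_child_of_A[OF children w(1)] by blast
  have "u \<noteq> y" using u(2) y(1) A_subset_S by auto
  then have "depth E r w \<noteq> Suc (depth E r u)"
    using lower_neighbour_unique[of w u y] adj_sym[OF w(2)] y by auto
  then have depth_u: "depth E r u = Suc (depth E r w)"
    using depth_adj[OF w(2)] by simp
  have "x \<noteq> w" using w(1) assms(3) N_disjoint_S by (auto simp: crit_def)
  then have "depth E r u \<noteq> Suc (depth E r x)"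
    using lower_neighbour_unique[of u x w] adj_sym[OF u(1)] w(2) depth_u by auto
  then have depth_x: "depth E r x = Suc (depth E r u)"
    using depth_adj[OF u(1)] by simp
  have "grandchild V E r x w"
    using grandchild_intro[OF u(1) w(2) depth_u depth_x] .
  moreover have "p = u" if "parent V E r p x" for p
  proof -
    have "child V E r x p" using that by (simp add: parent_def)
    then show ?thesis
      using lower_neighbour_unique[OF _ u(1) _ depth_x] child_adj_depth by blast
  qed
  moreover have "u \<notin> S'" using u(2,3) by (simp add: S'_eq)
  ultimately show ?thesis using w(1) by blast
qed

end

theorem lemma4p3:
  fixes V :: "'a set" and E :: "'a \<Rightarrow> 'a \<Rightarrow> bool" and r :: 'a
    and S A :: "'a set"
  defines "N \<equiv> nbh_set V E A \<inter> N1 V E S"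
  defines "S' \<equiv> (S - A) \<union> N"
  assumes tree: "tree V E" and root: "r \<in> V"
    and dom: "dominating V E S"
    and A: "A \<subseteq> crit1 V E S"
    and same_depth: "\<forall>y\<in>A. \<forall>z\<in>A. depth E r y = depth E r z"
  shows "card S' \<ge> card S
    \<and> (\<forall>x. (\<exists>y\<in>A. descendant V E r x y) \<longrightarrow> dominated_by E S' x)
    \<and> ((dominating V E S' \<and> (\<forall>w\<in>N. \<exists>y\<in>A. child V E r w y)) \<longrightarrow>
           ((\<forall>w\<in>N. \<forall>s\<in>S'. s \<noteq> w \<longrightarrow> \<not> E w s) \<and> N \<subseteq> crit V E S'
            \<and> (\<forall>x\<in>crit V E S. x \<in> S' - crit V E S' \<longrightarrow>
                 (\<exists>w\<in>N. grandchild V E r x w) \<and> (\<forall>p. parent V E r p x \<longrightarrow> p \<notin> S'))))"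
proof -
  interpret level_exchange V E r S A N S'
    by (rule level_exchange.intro[OF rooted_tree.intro[OF tree root]
          level_exchange_axioms.intro[OF dom A same_depth]]) (simp_all add: N_def S'_def)
  have "card S \<le> card S'"
    unfolding S'_def N_def using card_le_exchange[OF graph S_subset_V A] .
  moreover have "\<forall>x. (\<exists>y\<in>A. descendant V E r x y) \<longrightarrow> dominated_by E S' x"
    using descendant_of_A_dominated by blast
  moreover have "(\<forall>w\<in>N. \<forall>s\<in>S'. s \<noteq> w \<longrightarrow> \<not> E w s) \<and> N \<subseteq> crit V E S'
      \<and> (\<forall>x\<in>crit V E S. x \<in> S' - crit V E S' \<longrightarrow>
           (\<exists>w\<in>N. grandchild V E r x w) \<and> (\<forall>p. parent V E r p x \<longrightarrow> p \<notin> S'))"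
    if "dominating V E S'" and children: "\<forall>w\<in>N. \<exists>y\<in>A. child V E r w y"
    using N_isolated_in_S'[OF children] N_subset_crit[OF children]
      uncritical_vertex_below_N[OF children \<open>dominating V E S'\<close>] by blast
  ultimately show ?thesis by blast
qed

end
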